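(* Let $\omega_0\neq 0$ and let $u_x,u_y,u_z$ be arbitrary (bounded measurable) real functions of time. Consider the system $$\dot b_x=-\omega_0c_y-u_zb_y+u_yb_z,\quad \dot b_y=\omega_0c_x+u_zb_x-u_xb_z,\quad \dot b_z=u_xb_y-u_yb_x,$$ $$\dot c_x=-\omega_0b_y+u_yc_z-u_zc_y,\quad \dot c_y=\omega_0b_x-u_xc_z+u_zc_x,\quad \dot c_z=u_xc_y-u_yc_x.$$ Then along every solution the quantities $$E=\frac{\omega_0^2}{2}\sum_{k=x,y,z}(b_k^2+c_k^2),\qquad L=\omega_0\sum_{k=x,y,z}b_kc_k$$ are constant in time.
   Context: Solutions are understood as absolutely continuous real functions $b_k(t),c_k(t)$, $k=x,y,z$, satisfying the equations almost everywhere. *)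

theory Defs
  imports "HOL-Analysis.Analysis"
begin

definition abs_cont_on :: "(real \<Rightarrow> real) \<Rightarrow> real \<Rightarrow> real \<Rightarrow> bool" where
  "abs_cont_on f a b \<longleftrightarrow>
     (\<forall>\<epsilon>>0. \<exists>\<delta>>0. \<forall>(n::nat) (l::nat \<Rightarrow> real) (r::nat \<Rightarrow> real).
        (\<forall>i<n. a \<le> l i \<and> l i \<le> r i \<and> r i \<le> b) \<longrightarrow>
        (\<forall>i<n. \<forall>j<n. i \<noteq> j \<longrightarrow> r i \<le> l j \<or> r j \<le> l i) \<longrightarrow>
        (\<Sum>i<n. r i - l i) < \<delta> \<longrightarrow>
        (\<Sum>i<n. \<bar>f (r i) - f (l i)\<bar>) < \<epsilon>)"

end

(*
  Where the equations hold, E' and L' vanish by a direct computation: the control terms act on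
  b and c as the same infinitesimal rotation, which preserves |b|^2, |c|^2 and b.c, while the
  omega0-terms cancel in pairs.  Sums and products of absolutely continuous functions are
  absolutely continuous, so it remains to show that an absolutely continuous F with F' = 0
  almost everywhere is constant.  Cover the exceptional null set by an open set U of measure
  below the delta of absolute continuity and take a gauge that keeps intervals tagged in the
  null set inside U and elsewhere is small enough for |F v - F u| <= e (v - u).  Over a fine
  tagged division the first kind of interval contributes less than e by absolute continuity,
  the second at most e (b - a).
*)

theory Submission
  imports Defs
begin

definition nonoverlapping_intervals :: "real \<Rightarrow> real \<Rightarrow> 'i set \<Rightarrow> ('i \<Rightarrow> real) \<Rightarrow> ('i \<Rightarrow> real) \<Rightarrow> bool"
  where "nonoverlapping_intervals a b I l r \<longleftrightarrow> finite I \<and>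
    (\<forall>i\<in>I. a \<le> l i \<and> l i \<le> r i \<and> r i \<le> b) \<and>
    (\<forall>i\<in>I. \<forall>j\<in>I. i \<noteq> j \<longrightarrow> r i \<le> l j \<or> r j \<le> l i)"

lemma abs_cont_onE:
  fixes F :: "real \<Rightarrow> real"
  assumes "abs_cont_on F a b" and "e > 0"
  obtains \<delta> where "\<delta> > 0"
    and "\<And>I l r. nonoverlapping_intervals a b I l r \<Longrightarrow> (\<Sum>i\<in>I. r i - l i) < \<delta> \<Longrightarrow>
           (\<Sum>i\<in>I. \<bar>F (r i) - F (l i)\<bar>) < e"
proof -
  obtain \<delta> where "\<delta> > 0" and ac: "\<And>(n::nat) l r.
        (\<forall>i<n. a \<le> l i \<and> l i \<le> r i \<and> r i \<le> b) \<Longrightarrow>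
        (\<forall>i<n. \<forall>j<n. i \<noteq> j \<longrightarrow> r i \<le> l j \<or> r j \<le> l i) \<Longrightarrow>
        (\<Sum>i<n. r i - l i) < \<delta> \<Longrightarrow> (\<Sum>i<n. \<bar>F (r i) - F (l i)\<bar>) < e"
    using assms unfolding abs_cont_on_def by blast
  moreover have "(\<Sum>i\<in>I. \<bar>F (r i) - F (l i)\<bar>) < e"
    if "nonoverlapping_intervals a b I l r" and len: "(\<Sum>i\<in>I. r i - l i) < \<delta>"
    for I and l r :: "'a \<Rightarrow> real"
  proof -
    note I = that(1)[unfolded nonoverlapping_intervals_def]
    obtain h where h: "bij_betw h {..<card I} I"
      using ex_bij_betw_nat_finite[OF conjunct1[OF I]] by (auto simp: lessThan_atLeast0)
    then have hI: "h i \<in> I" if "i < card I" for i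
      using that bij_betwE by blast
    have hinj: "h i \<noteq> h j" if "i < card I" "j < card I" "i \<noteq> j" for i j
      using h that by (auto simp: bij_betw_def inj_on_def)
    have "(\<Sum>i<card I. \<bar>F ((r \<circ> h) i) - F ((l \<circ> h) i)\<bar>) < e"
      by (rule ac) (use I len hI hinj sum.reindex_bij_betw[OF h, of "\<lambda>i. r i - l i"] in auto)
    then show ?thesis
      using sum.reindex_bij_betw[OF h, of "\<lambda>i. \<bar>F (r i) - F (l i)\<bar>"] by simp
  qed
  ultimately show ?thesis using that by blast
qed

lemma abs_cont_on_subinterval:
  assumes "abs_cont_on f a b" and "c \<le> b"
  shows "abs_cont_on f a c"
  unfolding abs_cont_on_def
proof (intro allI impI)
  fix e :: real assume "e > 0"
  obtain \<delta> where "\<delta> > 0" and ac: "\<And>(I::nat set) l r. nonoverlapping_intervals a b I l r \<Longrightarrow>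
           (\<Sum>i\<in>I. r i - l i) < \<delta> \<Longrightarrow> (\<Sum>i\<in>I. \<bar>f (r i) - f (l i)\<bar>) < e"
    by (rule abs_cont_onE[OF assms(1) \<open>e > 0\<close>]) (rule that)
  show "\<exists>\<delta>>0. \<forall>(n::nat) l r. (\<forall>i<n. a \<le> l i \<and> l i \<le> r i \<and> r i \<le> c) \<longrightarrow>
        (\<forall>i<n. \<forall>j<n. i \<noteq> j \<longrightarrow> r i \<le> l j \<or> r j \<le> l i) \<longrightarrow>
        (\<Sum>i<n. r i - l i) < \<delta> \<longrightarrow> (\<Sum>i<n. \<bar>f (r i) - f (l i)\<bar>) < e"
  proof (intro exI[of _ \<delta>] conjI allI impI)
    fix n :: nat and l r :: "nat \<Rightarrow> real"
    assume "\<forall>i<n. a \<le> l i \<and> l i \<le> r i \<and> r i \<le> c"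
      and "\<forall>i<n. \<forall>j<n. i \<noteq> j \<longrightarrow> r i \<le> l j \<or> r j \<le> l i" and "(\<Sum>i<n. r i - l i) < \<delta>"
    then show "(\<Sum>i<n. \<bar>f (r i) - f (l i)\<bar>) < e"
      using ac[of "{..<n}" l r] \<open>c \<le> b\<close> by (force simp: nonoverlapping_intervals_def)
  qed (fact \<open>\<delta> > 0\<close>)
qed

lemma abs_cont_on_imp_continuous_on:
  assumes "abs_cont_on f a b"
  shows "continuous_on {a..b} f"
  unfolding continuous_on_iff
proof (intro ballI allI impI)
  fix x e :: real assume x: "x \<in> {a..b}" and "e > 0"
  obtain \<delta> where "\<delta> > 0" and ac: "\<And>(I::nat set) l r. nonoverlapping_intervals a b I l r \<Longrightarrow>
           (\<Sum>i\<in>I. r i - l i) < \<delta> \<Longrightarrow> (\<Sum>i\<in>I. \<bar>f (r i) - f (l i)\<bar>) < e"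
    by (rule abs_cont_onE[OF assms \<open>e > 0\<close>]) (rule that)
  show "\<exists>d>0. \<forall>y\<in>{a..b}. dist y x < d \<longrightarrow> dist (f y) (f x) < e"
  proof (intro exI[of _ \<delta>] conjI ballI impI \<open>\<delta> > 0\<close>)
    fix y assume y: "y \<in> {a..b}" and "dist y x < \<delta>"
    then have "(\<Sum>i\<in>{0::nat}. \<bar>f (max x y) - f (min x y)\<bar>) < e"
      using ac[of "{0}" "\<lambda>_. min x y" "\<lambda>_. max x y"] x
      by (auto simp: dist_real_def nonoverlapping_intervals_def)
    then show "dist (f y) (f x) < e"
      by (cases "x \<le> y") (auto simp: dist_real_def max_def min_def abs_minus_commute)
  qed
qed

lemma abs_cont_on_bounded:
  assumes "abs_cont_on f a b"
  obtains M where "M > 0" and "\<And>t. t \<in> {a..b} \<Longrightarrow> \<bar>f t\<bar> \<le> M"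
proof -
  have "bounded (f ` {a..b})"
    by (rule compact_imp_bounded compact_continuous_image
        abs_cont_on_imp_continuous_on[OF assms] compact_Icc)+
  then show ?thesis
    using that by (auto simp: bounded_pos)
qed

lemma abs_cont_on_dominated:
  assumes f: "abs_cont_on f a b" and g: "abs_cont_on g a b" and "C \<ge> 0"
    and dom: "\<And>x y. x \<in> {a..b} \<Longrightarrow> y \<in> {a..b} \<Longrightarrow>
                \<bar>h x - h y\<bar> \<le> C * (\<bar>f x - f y\<bar> + \<bar>g x - g y\<bar>)"
  shows "abs_cont_on h a b"
  unfolding abs_cont_on_def
proof (intro allI impI)
  fix e :: real assume "e > 0"
  define e' where "e' = e / (2 * (C + 1))"
  have "e' > 0" using \<open>e > 0\<close> \<open>C \<ge> 0\<close> by (simp add: e'_def)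
  obtain \<delta>f where "\<delta>f > 0" and acf: "\<And>(I::nat set) l r. nonoverlapping_intervals a b I l r \<Longrightarrow>
           (\<Sum>i\<in>I. r i - l i) < \<delta>f \<Longrightarrow> (\<Sum>i\<in>I. \<bar>f (r i) - f (l i)\<bar>) < e'"
    by (rule abs_cont_onE[OF f \<open>e' > 0\<close>]) (rule that)
  obtain \<delta>g where "\<delta>g > 0" and acg: "\<And>(I::nat set) l r. nonoverlapping_intervals a b I l r \<Longrightarrow>
           (\<Sum>i\<in>I. r i - l i) < \<delta>g \<Longrightarrow> (\<Sum>i\<in>I. \<bar>g (r i) - g (l i)\<bar>) < e'"
    by (rule abs_cont_onE[OF g \<open>e' > 0\<close>]) (rule that)
  show "\<exists>\<delta>>0. \<forall>(n::nat) l r. (\<forall>i<n. a \<le> l i \<and> l i \<le> r i \<and> r i \<le> b) \<longrightarrow>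
        (\<forall>i<n. \<forall>j<n. i \<noteq> j \<longrightarrow> r i \<le> l j \<or> r j \<le> l i) \<longrightarrow>
        (\<Sum>i<n. r i - l i) < \<delta> \<longrightarrow> (\<Sum>i<n. \<bar>h (r i) - h (l i)\<bar>) < e"
  proof (intro exI[of _ "min \<delta>f \<delta>g"] conjI allI impI)
    fix n :: nat and l r :: "nat \<Rightarrow> real"
    assume lr: "\<forall>i<n. a \<le> l i \<and> l i \<le> r i \<and> r i \<le> b"
      and sep: "\<forall>i<n. \<forall>j<n. i \<noteq> j \<longrightarrow> r i \<le> l j \<or> r j \<le> l i"
      and len: "(\<Sum>i<n. r i - l i) < min \<delta>f \<delta>g"
    have "(\<Sum>i<n. \<bar>h (r i) - h (l i)\<bar>) \<le> (\<Sum>i<n. C * (\<bar>f (r i) - f (l i)\<bar> + \<bar>g (r i) - g (l i)\<bar>))"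
      by (rule sum_mono) (use lr dom in auto)
    also have "\<dots> = C * ((\<Sum>i<n. \<bar>f (r i) - f (l i)\<bar>) + (\<Sum>i<n. \<bar>g (r i) - g (l i)\<bar>))"
      by (simp add: sum.distrib distrib_left sum_distrib_left)
    also have "\<dots> \<le> C * (e' + e')"
      using acf[of "{..<n}" l r] acg[of "{..<n}" l r] lr sep len \<open>C \<ge> 0\<close>
      by (intro mult_left_mono add_mono) (auto simp: nonoverlapping_intervals_def)
    also have "\<dots> < e"
    proof -
      have "2 * (C + 1) * e' = e" using \<open>C \<ge> 0\<close> by (simp add: e'_def)
      then show ?thesis using \<open>e' > 0\<close> by (simp add: algebra_simps)
    qed
    finally show "(\<Sum>i<n. \<bar>h (r i) - h (l i)\<bar>) < e" .
  qed (use \<open>\<delta>f > 0\<close> \<open>\<delta>g > 0\<close> in simp)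
qed

lemma abs_cont_on_add:
  assumes "abs_cont_on f a b" and "abs_cont_on g a b"
  shows "abs_cont_on (\<lambda>t. f t + g t) a b"
  by (rule abs_cont_on_dominated[OF assms, of 1]) auto

lemma abs_cont_on_mult:
  assumes f: "abs_cont_on f a b" and g: "abs_cont_on g a b"
  shows "abs_cont_on (\<lambda>t. f t * g t) a b"
proof -
  obtain Mf where "Mf > 0" and Mf: "\<And>t. t \<in> {a..b} \<Longrightarrow> \<bar>f t\<bar> \<le> Mf"
    using abs_cont_on_bounded[OF f] by blast
  obtain Mg where "Mg > 0" and Mg: "\<And>t. t \<in> {a..b} \<Longrightarrow> \<bar>g t\<bar> \<le> Mg"
    using abs_cont_on_bounded[OF g] by blast
  show ?thesis
  proof (rule abs_cont_on_dominated[OF f g, of "Mf + Mg"])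
    fix x y assume xy: "x \<in> {a..b}" "y \<in> {a..b}"
    have "\<bar>f x * g x - f y * g y\<bar> = \<bar>f x * (g x - g y) + g y * (f x - f y)\<bar>"
      by (simp add: algebra_simps)
    also have "\<dots> \<le> Mf * \<bar>g x - g y\<bar> + Mg * \<bar>f x - f y\<bar>"
      unfolding abs_mult[symmetric]
      by (rule order_trans[OF abs_triangle_ineq add_mono])
         (use Mf[OF xy(1)] Mg[OF xy(2)] in \<open>auto simp: abs_mult intro: mult_right_mono\<close>)
    also have "\<dots> \<le> (Mf + Mg) * (\<bar>f x - f y\<bar> + \<bar>g x - g y\<bar>)"
      using \<open>Mf > 0\<close> \<open>Mg > 0\<close> by (simp add: algebra_simps)
    finally show "\<bar>f x * g x - f y * g y\<bar> \<le> (Mf + Mg) * (\<bar>f x - f y\<bar> + \<bar>g x - g y\<bar>)" .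
  qed (use \<open>Mf > 0\<close> \<open>Mg > 0\<close> in simp)
qed

lemma null_sets_lebesgue_open_cover:
  assumes N: "N \<in> null_sets lebesgue" and "d > 0"
  obtains U where "open U" "N \<subseteq> U" "U \<in> lmeasurable" "measure lebesgue U < d"
proof -
  have "N \<in> sets lebesgue" using N by (rule null_setsD2)
  then obtain T where T: "open T" "N \<subseteq> T" "T - N \<in> lmeasurable" "emeasure lebesgue (T - N) < ennreal d"
    using sets_lebesgue_outer_open \<open>d > 0\<close> by blast
  have "N \<in> lmeasurable" using N \<open>N \<in> sets lebesgue\<close> by (simp add: fmeasurable_def null_setsD1)
  then have "T \<in> lmeasurable" using T(2,3) by (rule fmeasurable_Diff_D[rotated])
  moreover have "measure lebesgue T = measure lebesgue (T - N)"
    using \<open>T \<in> lmeasurable\<close> N by (simp add: measure_Diff_null_set)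
  moreover have "measure lebesgue (T - N) < d"
    using T(3,4) by (simp add: emeasure_eq_measure2 ennreal_less_iff)
  ultimately show ?thesis using that T(1,2) by auto
qed

lemma sum_interval_lengths_le_measure:
  assumes "nonoverlapping_intervals a b I l r" and "U \<in> lmeasurable"
    and sub: "\<And>i. i \<in> I \<Longrightarrow> {l i..r i} \<subseteq> U"
  shows "(\<Sum>i\<in>I. r i - l i) \<le> measure lebesgue U"
proof -
  have "finite I" and lr: "\<And>i. i \<in> I \<Longrightarrow> l i \<le> r i"
    and sep: "\<And>i j. i \<in> I \<Longrightarrow> j \<in> I \<Longrightarrow> i \<noteq> j \<Longrightarrow> r i \<le> l j \<or> r j \<le> l i"
    using assms(1) by (auto simp: nonoverlapping_intervals_def)
  have "(\<Sum>i\<in>I. r i - l i) = (\<Sum>i\<in>I. measure lebesgue {l i..r i})"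
    using lr by simp
  also have "\<dots> = measure lebesgue (\<Union>i\<in>I. {l i..r i})"
  proof (rule measure_negligible_finite_Union_image[symmetric])
    show "pairwise (\<lambda>i j. negligible ({l i..r i} \<inter> {l j..r j})) I"
    proof (rule pairwiseI)
      fix i j assume "i \<in> I" "j \<in> I" "i \<noteq> j"
      then have "{l i..r i} \<inter> {l j..r j} \<subseteq> {r i, r j}"
        using sep by fastforce
      then show "negligible ({l i..r i} \<inter> {l j..r j})"
        by (rule negligible_subset[rotated]) simp
    qed
  qed (use \<open>finite I\<close> in auto)
  also have "\<dots> \<le> measure lebesgue U"
    using sub \<open>U \<in> lmeasurable\<close> \<open>finite I\<close> by (intro measure_mono_fmeasurable sets.finite_UN) auto
  finally show ?thesis .
qed

lemma tagged_division_of_Icc_memD: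
  fixes a b :: real
  assumes "p tagged_division_of {a..b}" and "(x, K) \<in> p"
  shows "K = {Inf K..Sup K}" and "a \<le> Inf K" and "Inf K \<le> x" and "x \<le> Sup K" and "Sup K \<le> b"
proof -
  obtain u v where "K = cbox u v" using tagged_division_ofD(4)[OF assms] by blast
  moreover have "x \<in> K" and "K \<subseteq> {a..b}" using tagged_division_ofD(2,3)[OF assms] by auto
  ultimately show "K = {Inf K..Sup K}" "a \<le> Inf K" "Inf K \<le> x" "x \<le> Sup K" "Sup K \<le> b"
    by auto
qed

lemma tagged_division_of_Icc_separated:
  fixes a b :: real
  assumes p: "p tagged_division_of {a..b}"
    and xK: "(x, K) \<in> p" "Inf K < Sup K" and yL: "(y, L) \<in> p" "Inf L < Sup L"
    and "(x, K) \<noteq> (y, L)"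
  shows "Sup K \<le> Inf L \<or> Sup L \<le> Inf K"
proof (rule ccontr)
  assume "\<not> ?thesis"
  then have "(max (Inf K) (Inf L) + min (Sup K) (Sup L)) / 2 \<in> {Inf K<..<Sup K} \<inter> {Inf L<..<Sup L}"
    using xK(2) yL(2) by auto
  moreover have "interior K \<inter> interior L = {}"
    using tagged_division_ofD(5)[OF p xK(1) yL(1)] \<open>(x, K) \<noteq> (y, L)\<close> by blast
  then have "{Inf K<..<Sup K} \<inter> {Inf L<..<Sup L} = {}"
    using tagged_division_of_Icc_memD(1)[OF p xK(1)] tagged_division_of_Icc_memD(1)[OF p yL(1)]
    by (metis interior_atLeastAtMost_real)
  ultimately show False by blast
qed

lemma tagged_division_of_Icc_nonoverlapping:
  fixes a b :: real
  assumes p: "p tagged_division_of {a..b}" and "q \<subseteq> p"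
  shows "nonoverlapping_intervals a b {(x, K) \<in> q. Inf K < Sup K} (\<lambda>i. Inf (snd i)) (\<lambda>i. Sup (snd i))"
proof -
  let ?q' = "{(x, K) \<in> q. Inf K < Sup K}"
  have "finite ?q'" using p \<open>q \<subseteq> p\<close> by (blast intro: finite_subset)
  moreover have "a \<le> Inf (snd i) \<and> Inf (snd i) \<le> Sup (snd i) \<and> Sup (snd i) \<le> b" if iq: "i \<in> ?q'" for i
  proof -
    obtain x K where i: "i = (x, K)" and "(x, K) \<in> p" using iq \<open>q \<subseteq> p\<close> by auto
    then show ?thesis using tagged_division_of_Icc_memD[OF p \<open>(x, K) \<in> p\<close>] by simp
  qed
  moreover have "Sup (snd i) \<le> Inf (snd j) \<or> Sup (snd j) \<le> Inf (snd i)"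
    if "i \<in> ?q'" "j \<in> ?q'" "i \<noteq> j" for i j
  proof -
    obtain x K y L where "i = (x, K)" "j = (y, L)" by fastforce
    then show ?thesis
      using that \<open>q \<subseteq> p\<close> tagged_division_of_Icc_separated[OF p, of x K y L] by auto
  qed
  ultimately show ?thesis unfolding nonoverlapping_intervals_def by blast
qed

lemma sum_tagged_division_of_Icc_nondegenerate:
  fixes g :: "real \<Rightarrow> real \<Rightarrow> 'a::comm_monoid_add"
  assumes p: "p tagged_division_of {a..b}" and "q \<subseteq> p" and g: "\<And>c. g c c = 0"
  shows "(\<Sum>(x, K)\<in>q. g (Inf K) (Sup K)) = (\<Sum>(x, K)\<in>{(x, K) \<in> q. Inf K < Sup K}. g (Inf K) (Sup K))"
proof (rule sum.mono_neutral_right)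
  show "finite q" using p \<open>q \<subseteq> p\<close> by (blast intro: finite_subset)
  show "\<forall>i\<in>q - {(x, K) \<in> q. Inf K < Sup K}. (case i of (x, K) \<Rightarrow> g (Inf K) (Sup K)) = 0"
  proof
    fix i assume i: "i \<in> q - {(x, K) \<in> q. Inf K < Sup K}"
    obtain x K where xK: "i = (x, K)" by fastforce
    with i have "(x, K) \<in> p" and "\<not> Inf K < Sup K" using \<open>q \<subseteq> p\<close> by auto
    moreover have "Inf K \<le> x" "x \<le> Sup K" using tagged_division_of_Icc_memD(3,4)[OF p \<open>(x, K) \<in> p\<close>] .
    ultimately have "Sup K = Inf K" by linarith
    then show "(case i of (x, K) \<Rightarrow> g (Inf K) (Sup K)) = 0" using xK g by simp
  qed
qed auto

lemma has_real_derivative_zero_straddle: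
  fixes F :: "real \<Rightarrow> real"
  assumes "(F has_real_derivative 0) (at x)" and "e > 0"
  obtains r where "r > 0"
    and "\<And>u v. u \<le> x \<Longrightarrow> x \<le> v \<Longrightarrow> x - u < r \<Longrightarrow> v - x < r \<Longrightarrow> \<bar>F v - F u\<bar> \<le> e * (v - u)"
proof -
  have "((\<lambda>y. (F y - F x) / (y - x)) \<longlongrightarrow> 0) (at x)"
    using assms(1) by (simp add: has_field_derivative_iff)
  then obtain r where "r > 0"
    and r: "\<And>y. y \<noteq> x \<Longrightarrow> norm (y - x) < r \<Longrightarrow> norm ((F y - F x) / (y - x) - 0) < e"
    using \<open>e > 0\<close> unfolding LIM_eq by meson
  have near: "\<bar>F y - F x\<bar> \<le> e * \<bar>y - x\<bar>" if "\<bar>y - x\<bar> < r" for y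
  proof (cases "y = x")
    case False
    then have "\<bar>F y - F x\<bar> / \<bar>y - x\<bar> < e"
      using r[of y] that by simp
    then show ?thesis using False by (simp add: divide_less_eq)
  qed simp
  have "\<bar>F v - F u\<bar> \<le> e * (v - u)" if "u \<le> x" "x \<le> v" "x - u < r" "v - x < r" for u v
  proof -
    have "\<bar>F v - F u\<bar> \<le> \<bar>F v - F x\<bar> + \<bar>F u - F x\<bar>" by linarith
    also have "\<dots> \<le> e * (v - x) + e * (x - u)"
      using near[of v] near[of u] that by simp
    finally show ?thesis by (simp add: algebra_simps)
  qed
  with \<open>r > 0\<close> show ?thesis using that by blast
qed

lemma abs_cont_on_tagged_divisionE:
  fixes F :: "real \<Rightarrow> real"
  assumes "abs_cont_on F a b" and "e > 0"
  obtains \<delta> where "\<delta> > 0"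
    and "\<And>p q U. p tagged_division_of {a..b} \<Longrightarrow> q \<subseteq> p \<Longrightarrow> U \<in> lmeasurable \<Longrightarrow>
           measure lebesgue U < \<delta> \<Longrightarrow> (\<forall>(x, K)\<in>q. K \<subseteq> U) \<Longrightarrow>
           (\<Sum>(x, K)\<in>q. \<bar>F (Sup K) - F (Inf K)\<bar>) < e"
proof -
  obtain \<delta> where "\<delta> > 0" and small: "\<And>(I::(real \<times> real set) set) l r. nonoverlapping_intervals a b I l r \<Longrightarrow>
           (\<Sum>i\<in>I. r i - l i) < \<delta> \<Longrightarrow> (\<Sum>i\<in>I. \<bar>F (r i) - F (l i)\<bar>) < e"
    by (rule abs_cont_onE[OF assms]) (rule that)
  have "(\<Sum>(x, K)\<in>q. \<bar>F (Sup K) - F (Inf K)\<bar>) < e"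
    if p: "p tagged_division_of {a..b}" and "q \<subseteq> p" and U: "U \<in> lmeasurable" "measure lebesgue U < \<delta>"
      and qU: "\<forall>(x, K)\<in>q. K \<subseteq> U" for p q U
  proof -
    define q' where "q' = {(x, K) \<in> q. Inf K < Sup K}"
    have q': "nonoverlapping_intervals a b q' (\<lambda>i. Inf (snd i)) (\<lambda>i. Sup (snd i))"
      unfolding q'_def by (rule tagged_division_of_Icc_nonoverlapping[OF p \<open>q \<subseteq> p\<close>])
    have q'U: "{Inf (snd i)..Sup (snd i)} \<subseteq> U" if iq: "i \<in> q'" for i
    proof -
      obtain x K where i: "i = (x, K)" by fastforce
      with iq have "(x, K) \<in> p" "K \<subseteq> U" using \<open>q \<subseteq> p\<close> qU by (auto simp: q'_def)
      then show ?thesis using i tagged_division_of_Icc_memD(1)[OF p] by auto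
    qed
    \<comment> \<open>only the nondegenerate intervals are pairwise nonoverlapping\<close>
    have "(\<Sum>(x, K)\<in>q. \<bar>F (Sup K) - F (Inf K)\<bar>) = (\<Sum>(x, K)\<in>q'. \<bar>F (Sup K) - F (Inf K)\<bar>)"
      unfolding q'_def
      by (rule sum_tagged_division_of_Icc_nondegenerate[OF p \<open>q \<subseteq> p\<close>, of "\<lambda>u v. \<bar>F v - F u\<bar>",
            simplified])
    also have "\<dots> = (\<Sum>i\<in>q'. \<bar>F (Sup (snd i)) - F (Inf (snd i))\<bar>)"
      by (simp add: case_prod_beta)
    also have "\<dots> < e"
    proof (rule small[OF q'])
      have "(\<Sum>i\<in>q'. Sup (snd i) - Inf (snd i)) \<le> measure lebesgue U"
        using q' U(1) q'U by (rule sum_interval_lengths_le_measure)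
      then show "(\<Sum>i\<in>q'. Sup (snd i) - Inf (snd i)) < \<delta>" using U(2) by linarith
    qed
    finally show ?thesis .
  qed
  with \<open>\<delta> > 0\<close> show ?thesis using that by blast
qed

lemma sum_tagged_division_of_Icc_le:
  fixes F :: "real \<Rightarrow> real"
  assumes p: "p tagged_division_of {a..b}" and "a \<le> b" and "r \<subseteq> p" and "e \<ge> 0"
    and le: "\<And>x K. (x, K) \<in> r \<Longrightarrow> \<bar>F (Sup K) - F (Inf K)\<bar> \<le> e * (Sup K - Inf K)"
  shows "(\<Sum>(x, K)\<in>r. \<bar>F (Sup K) - F (Inf K)\<bar>) \<le> e * (b - a)"
proof -
  have "finite p" using p by blast
  have "(\<Sum>(x, K)\<in>r. \<bar>F (Sup K) - F (Inf K)\<bar>) \<le> (\<Sum>(x, K)\<in>r. e * (Sup K - Inf K))"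
    using le by (intro sum_mono) auto
  also have "\<dots> \<le> (\<Sum>(x, K)\<in>p. e * (Sup K - Inf K))"
    using \<open>finite p\<close> \<open>r \<subseteq> p\<close> \<open>e \<ge> 0\<close> tagged_division_of_Icc_memD(3,4)[OF p]
    by (intro sum_mono2) (force intro: order.trans)+
  also have "\<dots> = e * (b - a)"
    using additive_tagged_division_1[OF \<open>a \<le> b\<close> p, of "\<lambda>x. x"]
    by (simp add: sum_distrib_left[symmetric] case_prod_beta)
  finally show ?thesis .
qed

lemma zero_derivative_straddle_gauge:
  fixes F :: "real \<Rightarrow> real"
  assumes "open U" and "N \<subseteq> U"
    and der: "\<And>t. t \<in> S - N \<Longrightarrow> (F has_real_derivative 0) (at t)" and "e > 0"
  obtains d where "\<And>x. d x > 0" and "\<And>x. x \<in> N \<Longrightarrow> ball x (d x) \<subseteq> U"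
    and "\<And>x u v. x \<in> S - N \<Longrightarrow> u \<le> x \<Longrightarrow> x \<le> v \<Longrightarrow> x - u < d x \<Longrightarrow> v - x < d x \<Longrightarrow>
        \<bar>F v - F u\<bar> \<le> e * (v - u)"
proof -
  have "\<exists>r>0. (x \<in> N \<longrightarrow> ball x r \<subseteq> U) \<and> (x \<in> S - N \<longrightarrow>
          (\<forall>u v. u \<le> x \<longrightarrow> x \<le> v \<longrightarrow> x - u < r \<longrightarrow> v - x < r \<longrightarrow> \<bar>F v - F u\<bar> \<le> e * (v - u)))" for x
  proof (cases "x \<in> S - N")
    case True
    then obtain r where "r > 0" and "\<And>u v. u \<le> x \<Longrightarrow> x \<le> v \<Longrightarrow> x - u < r \<Longrightarrow> v - x < r \<Longrightarrow>
        \<bar>F v - F u\<bar> \<le> e * (v - u)"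
      using has_real_derivative_zero_straddle[OF der \<open>e > 0\<close>] by blast
    then show ?thesis using True by blast
  next
    case False
    show ?thesis
    proof (cases "x \<in> N")
      case True
      then show ?thesis using assms(1,2) open_contains_ball by blast
    qed (use False in \<open>auto intro: exI[of _ 1]\<close>)
  qed
  then show ?thesis using that by metis
qed

lemma fine_tagged_division_of_Icc_memD:
  fixes a b :: real
  assumes p: "p tagged_division_of {a..b}" and fine: "(\<lambda>x. ball x (d x)) fine p"
    and xK: "(x, K) \<in> p"
  shows "x - Inf K < d x" and "Sup K - x < d x" and "K \<subseteq> ball x (d x)"
proof -
  note memD = tagged_division_of_Icc_memD[OF p xK]
  show "K \<subseteq> ball x (d x)" using fine xK by (auto simp: fine_def)
  moreover have "Inf K \<in> K" "Sup K \<in> K"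
    using memD by (metis atLeastAtMost_iff order.refl order.trans)+
  ultimately show "x - Inf K < d x" "Sup K - x < d x"
    using memD(3,4) by (auto simp: dist_real_def)
qed

lemma abs_cont_on_zero_derivative_bound:
  fixes F :: "real \<Rightarrow> real"
  assumes "a \<le> b" and "abs_cont_on F a b" and N: "N \<in> null_sets lebesgue"
    and der: "\<And>t. t \<in> {a..b} - N \<Longrightarrow> (F has_real_derivative 0) (at t)"
    and "e > 0"
  shows "\<bar>F b - F a\<bar> \<le> e * (b - a + 1)"
proof -
  obtain \<delta> where "\<delta> > 0" and small: "\<And>p q U. p tagged_division_of {a..b} \<Longrightarrow> q \<subseteq> p \<Longrightarrow>
           U \<in> lmeasurable \<Longrightarrow> measure lebesgue U < \<delta> \<Longrightarrow> (\<forall>(x, K)\<in>q. K \<subseteq> U) \<Longrightarrow>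
           (\<Sum>(x, K)\<in>q. \<bar>F (Sup K) - F (Inf K)\<bar>) < e"
    by (rule abs_cont_on_tagged_divisionE[OF assms(2) \<open>e > 0\<close>]) (rule that)
  obtain U where U: "open U" "N \<subseteq> U" "U \<in> lmeasurable" "measure lebesgue U < \<delta>"
    using null_sets_lebesgue_open_cover[OF N \<open>\<delta> > 0\<close>] by blast
  obtain d where d_pos: "\<And>x. d x > 0" and d_N: "\<And>x. x \<in> N \<Longrightarrow> ball x (d x) \<subseteq> U"
    and straddle: "\<And>x u v. x \<in> {a..b} - N \<Longrightarrow> u \<le> x \<Longrightarrow> x \<le> v \<Longrightarrow> x - u < d x \<Longrightarrow> v - x < d x \<Longrightarrow>
        \<bar>F v - F u\<bar> \<le> e * (v - u)"
    using zero_derivative_straddle_gauge[OF U(1,2) der \<open>e > 0\<close>] by blast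
  obtain p where p: "p tagged_division_of {a..b}" and fine: "(\<lambda>x. ball x (d x)) fine p"
    using fine_division_exists[OF gauge_ball_dependent, of d a b] d_pos by auto
  have "finite p" using p by blast
  note memD = tagged_division_of_Icc_memD[OF p]
  note tag = fine_tagged_division_of_Icc_memD[OF p fine]
  define q where "q = {(x, K) \<in> p. x \<in> N}"
  have "q \<subseteq> p" by (auto simp: q_def)
  have "\<bar>F b - F a\<bar> = \<bar>\<Sum>(x, K)\<in>p. F (Sup K) - F (Inf K)\<bar>"
    using additive_tagged_division_1[OF \<open>a \<le> b\<close> p, of F] by simp
  also have "\<dots> \<le> (\<Sum>(x, K)\<in>p. \<bar>F (Sup K) - F (Inf K)\<bar>)"
    by (simp add: case_prod_beta)
  also have "\<dots> = (\<Sum>(x, K)\<in>p - q. \<bar>F (Sup K) - F (Inf K)\<bar>) + (\<Sum>(x, K)\<in>q. \<bar>F (Sup K) - F (Inf K)\<bar>)"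
    by (rule sum.subset_diff[OF \<open>q \<subseteq> p\<close> \<open>finite p\<close>])
  also have "\<dots> \<le> e * (b - a) + e"
  proof (rule add_mono)
    show "(\<Sum>(x, K)\<in>p - q. \<bar>F (Sup K) - F (Inf K)\<bar>) \<le> e * (b - a)"
    proof (rule sum_tagged_division_of_Icc_le[OF p \<open>a \<le> b\<close> _ less_imp_le[OF \<open>e > 0\<close>]])
      fix x K assume "(x, K) \<in> p - q"
      then have "(x, K) \<in> p" and "x \<in> {a..b} - N"
        using memD(2-5) by (fastforce simp: q_def)+
      then show "\<bar>F (Sup K) - F (Inf K)\<bar> \<le> e * (Sup K - Inf K)"
        using straddle tag(1,2) memD(3,4) by metis
    qed blast
    have "(\<Sum>(x, K)\<in>q. \<bar>F (Sup K) - F (Inf K)\<bar>) < e"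
      using small[OF p \<open>q \<subseteq> p\<close> U(3,4)] tag(3) d_N by (force simp: q_def)
    then show "(\<Sum>(x, K)\<in>q. \<bar>F (Sup K) - F (Inf K)\<bar>) \<le> e" by simp
  qed
  finally show ?thesis by (simp add: algebra_simps)
qed

lemma abs_cont_on_AE_zero_derivative_imp_constant:
  fixes F :: "real \<Rightarrow> real"
  assumes ac: "abs_cont_on F a b"
    and der: "AE t in lebesgue. t \<in> {a..b} \<longrightarrow> (F has_real_derivative 0) (at t)"
    and t: "t \<in> {a..b}"
  shows "F t = F a"
proof -
  obtain N where N: "N \<in> null_sets lebesgue"
    and "{s. \<not> (s \<in> {a..b} \<longrightarrow> (F has_real_derivative 0) (at s))} \<subseteq> N"
    using der by (auto simp: eventually_ae_filter)
  then have der': "(F has_real_derivative 0) (at s)" if "s \<in> {a..t} - N" for s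
    using that t by auto
  have "\<bar>F t - F a\<bar> \<le> 0 + e" if "e > 0" for e
  proof -
    have "\<bar>F t - F a\<bar> \<le> e / (t - a + 1) * (t - a + 1)"
      using t that by (intro abs_cont_on_zero_derivative_bound[OF _ abs_cont_on_subinterval[OF ac] N der']) auto
    then show ?thesis using t by simp
  qed
  then have "\<bar>F t - F a\<bar> \<le> 0" by (rule field_le_epsilon)
  then show ?thesis by simp
qed

lemma norms_and_inner_has_real_derivative_zero:
  fixes \<omega> t :: real
  assumes "(bX has_real_derivative (- \<omega> * cY t - uZ t * bY t + uY t * bZ t)) (at t)"
    and "(bY has_real_derivative (\<omega> * cX t + uZ t * bX t - uX t * bZ t)) (at t)"
    and "(bZ has_real_derivative (uX t * bY t - uY t * bX t)) (at t)"
    and "(cX has_real_derivative (- \<omega> * bY t + uY t * cZ t - uZ t * cY t)) (at t)"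
    and "(cY has_real_derivative (\<omega> * bX t - uX t * cZ t + uZ t * cX t)) (at t)"
    and "(cZ has_real_derivative (uX t * cY t - uY t * cX t)) (at t)"
  shows "((\<lambda>s. (bX s)\<^sup>2 + (cX s)\<^sup>2 + (bY s)\<^sup>2 + (cY s)\<^sup>2 + (bZ s)\<^sup>2 + (cZ s)\<^sup>2)
           has_real_derivative 0) (at t)"
    and "((\<lambda>s. bX s * cX s + bY s * cY s + bZ s * cZ s) has_real_derivative 0) (at t)"
  by (rule derivative_eq_intros assms refl | simp add: algebra_simps power2_eq_square)+

theorem proposition2:
  fixes \<omega>0 t0 t1 :: real
    and uX uY uZ bX bY bZ cX cY cZ :: "real \<Rightarrow> real"
  assumes "\<omega>0 \<noteq> 0"
    and "t0 \<le> t1"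
    and "uX \<in> borel_measurable borel" "uY \<in> borel_measurable borel" "uZ \<in> borel_measurable borel"
    and "bounded (range uX)" "bounded (range uY)" "bounded (range uZ)"
    and "abs_cont_on bX t0 t1" "abs_cont_on bY t0 t1" "abs_cont_on bZ t0 t1"
    and "abs_cont_on cX t0 t1" "abs_cont_on cY t0 t1" "abs_cont_on cZ t0 t1"
    and "AE t in lebesgue. t \<in> {t0..t1} \<longrightarrow>
           (bX has_real_derivative (- \<omega>0 * cY t - uZ t * bY t + uY t * bZ t)) (at t) \<and>
           (bY has_real_derivative (\<omega>0 * cX t + uZ t * bX t - uX t * bZ t)) (at t) \<and>
           (bZ has_real_derivative (uX t * bY t - uY t * bX t)) (at t) \<and>
           (cX has_real_derivative (- \<omega>0 * bY t + uY t * cZ t - uZ t * cY t)) (at t) \<and>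
           (cY has_real_derivative (\<omega>0 * bX t - uX t * cZ t + uZ t * cX t)) (at t) \<and>
           (cZ has_real_derivative (uX t * cY t - uY t * cX t)) (at t)"
  shows "\<forall>t\<in>{t0..t1}.
      \<omega>0^2 / 2 * ((bX t)^2 + (cX t)^2 + (bY t)^2 + (cY t)^2 + (bZ t)^2 + (cZ t)^2)
        = \<omega>0^2 / 2 * ((bX t0)^2 + (cX t0)^2 + (bY t0)^2 + (cY t0)^2 + (bZ t0)^2 + (cZ t0)^2)
    \<and> \<omega>0 * (bX t * cX t + bY t * cY t + bZ t * cZ t)
        = \<omega>0 * (bX t0 * cX t0 + bY t0 * cY t0 + bZ t0 * cZ t0)"
proof -
  define E where "E s = (bX s)\<^sup>2 + (cX s)\<^sup>2 + (bY s)\<^sup>2 + (cY s)\<^sup>2 + (bZ s)\<^sup>2 + (cZ s)\<^sup>2" for s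
  define L where "L s = bX s * cX s + bY s * cY s + bZ s * cZ s" for s
  have "AE t in lebesgue. t \<in> {t0..t1} \<longrightarrow>
      (E has_real_derivative 0) (at t) \<and> (L has_real_derivative 0) (at t)"
    using assms(15) unfolding E_def[abs_def] L_def[abs_def]
    by eventually_elim (intro impI conjI norms_and_inner_has_real_derivative_zero; blast)
  then have AE_E: "AE t in lebesgue. t \<in> {t0..t1} \<longrightarrow> (E has_real_derivative 0) (at t)"
    and AE_L: "AE t in lebesgue. t \<in> {t0..t1} \<longrightarrow> (L has_real_derivative 0) (at t)"
    by (auto elim: eventually_mono)
  have "abs_cont_on E t0 t1" and "abs_cont_on L t0 t1"
    unfolding E_def L_def power2_eq_square by (intro abs_cont_on_add abs_cont_on_mult assms(9-14))+
  then have const: "E t = E t0 \<and> L t = L t0" if "t \<in> {t0..t1}" for t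
    using abs_cont_on_AE_zero_derivative_imp_constant[OF _ AE_E that]
      abs_cont_on_AE_zero_derivative_imp_constant[OF _ AE_L that] by simp
  show ?thesis
    unfolding E_def[symmetric] L_def[symmetric] by (auto dest: const)
qed
end
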